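(* Let $\alpha,\beta\in\mathbb D$ with $\alpha\ne\beta$, $t\in[0,1]$, $\omega\in\mathbb T$, $\gamma:=t\alpha+(1-t)\beta$ and $\varphi(\lambda):=\lambda\,(\omega m_\alpha(\lambda),\,m_\beta(\lambda))$. Then for every $\lambda\in\mathbb D$ with $m_\gamma(\lambda)\neq\lambda$ and $\varphi(\lambda)\ne\varphi(m_\gamma(\lambda))$, $$c\big(\varphi(\lambda),\varphi(m_\gamma(\lambda))\big)=l\big(\varphi(\lambda),\varphi(m_\gamma(\lambda))\big).$$
   Context: $\mathbb D$ is the open unit disc, $\mathbb T$ the unit circle; for $a\in\mathbb D$, $m_a(\lambda)=\frac{a-\lambda}{1-\bar a\lambda}$. For distinct $p,q\in\mathbb D^2$, $c(p,q):=c_{\mathbb D^2}((0,0);p,q)$ and $l(p,q):=l_{\mathbb D^2}((0,0);p,q)$, where for a domain $D$, $z\in D$ and distinct poles $p_1,\dots,p_N\in D$: $l_D(z;p_1,\dots,p_N)$ is the infimum of $\sum_j\log|\lambda_j|$ over holomorphic $\psi:\mathbb D\to D$ and $\lambda_j\in\mathbb D$ with $\psi(0)=z$, $\psi(\lambda_j)=p_j$; and $c_D(z;p_1,\dots,p_N)=\sup\{\log|F(z)|: F:D\to\mathbb D\text{ holomorphic}, F(p_j)=0\ \forall j\}$. *)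

theory Defs
  imports "HOL-Analysis.Analysis"
begin

definition unit_disc :: "complex set" where
  "unit_disc = ball 0 1"

definition bidisc :: "(complex \<times> complex) set" where
  "bidisc = unit_disc \<times> unit_disc"

definition mobius :: "complex \<Rightarrow> complex \<Rightarrow> complex" where
  "mobius a z = (a - z) / (1 - cnj a * z)"

definition elog :: "real \<Rightarrow> ereal" where
  "elog x = (if x = 0 then -\<infinity> else ereal (ln x))"

text \<open>Holomorphy of a function of two complex variables on a set:
  complex Frechet differentiability (derivative is C-linear).\<close>
definition holo2 :: "(complex \<times> complex \<Rightarrow> complex) \<Rightarrow> (complex \<times> complex) set \<Rightarrow> bool" where
  "holo2 F S \<longleftrightarrow> (\<forall>z\<in>S. \<exists>a b. (F has_derivative (\<lambda>(u, v). a * u + b * v)) (at z))"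

definition holo_disc_map :: "(complex \<Rightarrow> complex \<times> complex) \<Rightarrow> (complex \<times> complex) set \<Rightarrow> bool" where
  "holo_disc_map \<psi> D \<longleftrightarrow> (\<lambda>z. fst (\<psi> z)) holomorphic_on unit_disc \<and>
      (\<lambda>z. snd (\<psi> z)) holomorphic_on unit_disc \<and> \<psi> ` unit_disc \<subseteq> D"

definition lempert :: "(complex \<times> complex) set \<Rightarrow> complex \<times> complex \<Rightarrow> (complex \<times> complex) list \<Rightarrow> ereal" where
  "lempert D z ps = Inf {(\<Sum>j<length ps. elog (norm (ls ! j))) | \<psi> ls.
      holo_disc_map \<psi> D \<and> \<psi> 0 = z \<and> length ls = length ps \<and>
      (\<forall>j<length ps. ls ! j \<in> unit_disc \<and> \<psi> (ls ! j) = ps ! j)}"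

definition green_c :: "(complex \<times> complex) set \<Rightarrow> complex \<times> complex \<Rightarrow> (complex \<times> complex) list \<Rightarrow> ereal" where
  "green_c D z ps = Sup {elog (norm (F z)) | F.
      holo2 F D \<and> F ` D \<subseteq> unit_disc \<and> (\<forall>j<length ps. F (ps ! j) = 0)}"

definition c2 :: "complex \<times> complex \<Rightarrow> complex \<times> complex \<Rightarrow> ereal" where
  "c2 p q = green_c bidisc (0, 0) [p, q]"

definition l2 :: "complex \<times> complex \<Rightarrow> complex \<times> complex \<Rightarrow> ereal" where
  "l2 p q = lempert bidisc (0, 0) [p, q]"

end

theory Submission
  imports Defs "HOL-Complex_Analysis.Complex_Analysis"
begin

text \<open>The inequality \<open>c \<le> l\<close> holds on any domain: composing a competitor \<open>F\<close> for \<open>c\<close> with a competitor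
  disc \<open>\<psi>\<close> for \<open>l\<close> gives a self-map of the disc vanishing at the two preimages of the poles, so the
  two-point Schwarz--Pick lemma bounds \<open>|F(0)|\<close> by the product of their moduli.

  For the converse, \<open>\<phi>\<close> itself is a competitor for \<open>l\<close> with poles at \<open>\<lambda>\<close> and \<open>\<mu> = m\<^sub>\<gamma>(\<lambda>)\<close>. With
  \<open>\<eta> = conj(\<alpha> - \<beta>) / (\<alpha> - \<beta>)\<close> the rational function \<open>G = inner_num / inner_den\<close> maps the bidisc into
  the disc, because \<open>|inner_den|\<^sup>2 - |inner_num|\<^sup>2\<close> is a convex combination of positive terms, and
  \<open>G(conj \<omega> z, w)\<close> pulls back along \<open>\<phi>\<close> to \<open>\<lambda> m\<^sub>\<gamma>(\<lambda>)\<close>. Hence \<open>m\<^bsub>\<lambda>\<mu>\<^esub> \<circ> G\<close> vanishes at both poles and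
  has modulus \<open>|\<lambda>| |\<mu>|\<close> at the origin, which is the value of \<open>l\<close> found above.\<close>

lemma mobius_eq_neg_Moebius_function: "mobius a z = - Moebius_function 0 a z"
  by (simp add: mobius_def Moebius_function_def minus_divide_left)

lemma mobius_denominator_nonzero: "norm a < 1 \<Longrightarrow> norm z < 1 \<Longrightarrow> 1 - cnj a * z \<noteq> 0"
  using norm_mult_less[of "cnj a" 1 z 1] by auto

lemma norm_mobius_less_1: "norm a < 1 \<Longrightarrow> norm z < 1 \<Longrightarrow> norm (mobius a z) < 1"
  using Moebius_function_norm_lt_1[of a z 0] by (simp add: mobius_eq_neg_Moebius_function)

lemma mobius_holomorphic: "norm a < 1 \<Longrightarrow> mobius a holomorphic_on ball 0 1"
  unfolding mobius_def by (intro holomorphic_intros) (metis mobius_denominator_nonzero mem_ball_0)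

lemma mobius_self [simp]: "mobius a a = 0"
  by (simp add: mobius_def)

lemma mobius_0 [simp]: "mobius a 0 = a"
  by (simp add: mobius_def)

lemma mobius_mobius:
  assumes a: "norm a < 1" and z: "norm z < 1"
  shows "mobius a (mobius a z) = z"
proof -
  have d: "1 - cnj a * z \<noteq> 0" and aa: "1 - cnj a * a \<noteq> 0"
    using mobius_denominator_nonzero a z by auto
  have "1 - cnj a * mobius a z = (1 - cnj a * a) / (1 - cnj a * z)"
    and "a - mobius a z = z * (1 - cnj a * a) / (1 - cnj a * z)"
    using d by (simp_all add: mobius_def field_simps)
  then show ?thesis
    using d aa by (simp add: mobius_def)
qed

lemma norm_mobius_mobius_swap:
  assumes a: "norm a < 1" and b: "norm b < 1"
  shows "norm (mobius (mobius a b) a) = norm b"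
proof -
  have d: "1 - cnj a * b \<noteq> 0" and aa: "1 - cnj a * a \<noteq> 0"
    using mobius_denominator_nonzero a b by auto
  have d': "1 - a * cnj b \<noteq> 0"
    using d by (metis complex_cnj_cnj complex_cnj_mult complex_cnj_one right_minus_eq)
  have num: "mobius a b - a = - b * (1 - cnj a * a) / (1 - cnj a * b)"
    and den: "1 - cnj (mobius a b) * a = (1 - cnj a * a) / (1 - a * cnj b)"
    using d d' by (simp_all add: mobius_def field_simps)
  have "mobius (mobius a b) a = (mobius a b - a) / (1 - cnj (mobius a b) * a)"
    by (rule mobius_def)
  also have "\<dots> = - b * (1 - a * cnj b) / (1 - cnj a * b)"
    unfolding num den using aa d d' by (simp add: divide_simps)
  finally have "mobius (mobius a b) a = - b * (1 - a * cnj b) / (1 - cnj a * b)" .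
  moreover have "norm (1 - a * cnj b) = norm (1 - cnj a * b)"
    by (metis complex_cnj_cnj complex_cnj_mult complex_cnj_one complex_cnj_diff complex_mod_cnj)
  ultimately show ?thesis
    using d by (simp add: norm_mult norm_divide)
qed

lemma norm_convex_combination_less_1:
  fixes a b :: complex and t :: real
  assumes "norm a < 1" "norm b < 1" "0 \<le> t" "t \<le> 1"
  shows "norm (of_real t * a + of_real (1 - t) * b) < 1"
  using convexD_alt[OF convex_ball[of 0 1], of b a t] assms
  by (simp add: scaleR_conv_of_real add.commute)

lemma schwarz_pick_zero:
  assumes h: "h holomorphic_on ball 0 1" and h_disc: "\<And>z. norm z < 1 \<Longrightarrow> norm (h z) < 1"
    and a: "norm a < 1" and "h a = 0" and z: "norm z < 1"
  shows "norm (h z) \<le> norm (mobius a z)"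
proof -
  have "(h \<circ> mobius a) holomorphic_on ball 0 1"
    by (rule holomorphic_on_compose_gen[OF mobius_holomorphic[OF a] h])
       (auto simp: norm_mobius_less_1 a)
  moreover have "(h \<circ> mobius a) 0 = 0"
    using \<open>h a = 0\<close> by simp
  ultimately have "norm ((h \<circ> mobius a) (mobius a z)) \<le> norm (mobius a z)"
    using Schwarz_Lemma(1) h_disc a z norm_mobius_less_1 by (metis comp_apply)
  then show ?thesis
    by (simp add: mobius_mobius a z)
qed

text \<open>A self-map of the disc fixing 0 and vanishing at some other point is not a rotation, so by the
  equality case of Schwarz's lemma the quotient \<open>k z / z\<close> again maps the disc into the disc.\<close>

lemma schwarz_quotient:
  assumes k: "k holomorphic_on ball 0 1" and "k 0 = 0"
    and k_disc: "\<And>z. norm z < 1 \<Longrightarrow> norm (k z) < 1"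
    and c: "norm c < 1" "c \<noteq> 0" "k c = 0"
  obtains q where "q holomorphic_on ball 0 1" "\<And>z. norm z < 1 \<Longrightarrow> k z = z * q z"
    "\<And>z. norm z < 1 \<Longrightarrow> norm (q z) < 1"
proof -
  obtain q where q: "q holomorphic_on ball 0 1" and kq: "\<And>z. norm z < 1 \<Longrightarrow> k z = z * q z"
    and dk: "deriv k 0 = q 0"
    using Schwarz3[OF k \<open>k 0 = 0\<close>] by blast
  have not_rotation: "\<not> (\<exists>\<alpha>. (\<forall>z. norm z < 1 \<longrightarrow> k z = \<alpha> * z) \<and> norm \<alpha> = 1)"
    using c by force
  have "norm (q z) < 1" if z: "norm z < 1" for z
  proof (cases "z = 0")
    case True
    then show ?thesis
      using Schwarz_Lemma(2,3)[OF k \<open>k 0 = 0\<close> k_disc z] not_rotation dk by fastforce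
  next
    case False
    have "norm z * norm (q z) \<le> norm z"
      using Schwarz_Lemma(1)[OF k \<open>k 0 = 0\<close> k_disc z] kq[OF z] by (simp add: norm_mult)
    moreover have "norm z * norm (q z) \<noteq> norm z"
      using Schwarz_Lemma(3)[OF k \<open>k 0 = 0\<close> k_disc z] not_rotation kq z False
      by (metis norm_mult)
    ultimately show ?thesis
      using False by (simp add: mult_le_cancel_left1 order_le_less)
  qed
  then show thesis
    using that q kq by blast
qed

lemma schwarz_pick_two_zeros:
  assumes h: "h holomorphic_on ball 0 1" and h_disc: "\<And>z. norm z < 1 \<Longrightarrow> norm (h z) < 1"
    and a: "norm a < 1" and b: "norm b < 1" and "a \<noteq> b" and "h a = 0" and "h b = 0"
  shows "norm (h 0) \<le> norm a * norm b"
proof -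
  define k where "k = h \<circ> mobius a"
  define c where "c = mobius a b"
  have k: "k holomorphic_on ball 0 1"
    unfolding k_def
    by (rule holomorphic_on_compose_gen[OF mobius_holomorphic[OF a] h])
       (auto simp: norm_mobius_less_1 a)
  have c: "norm c < 1" "c \<noteq> 0" "k c = 0"
    using norm_mobius_less_1[OF a b] mobius_denominator_nonzero[OF a b] \<open>a \<noteq> b\<close> \<open>h b = 0\<close>
    by (simp_all add: c_def k_def mobius_mobius a b) (simp add: mobius_def)
  obtain q where q: "q holomorphic_on ball 0 1" and kq: "\<And>z. norm z < 1 \<Longrightarrow> k z = z * q z"
    and q_disc: "\<And>z. norm z < 1 \<Longrightarrow> norm (q z) < 1"
    using schwarz_quotient[OF k _ _ c] \<open>h a = 0\<close> h_disc norm_mobius_less_1[OF a]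
    by (auto simp: k_def)
  have "q c = 0"
    using kq[OF c(1)] c by simp
  then have "norm (q a) \<le> norm (mobius c a)"
    using schwarz_pick_zero[OF q q_disc c(1) _ a] by blast
  also have "\<dots> = norm b"
    unfolding c_def by (rule norm_mobius_mobius_swap[OF a b])
  finally have "norm (q a) \<le> norm b" .
  moreover have "h 0 = a * q a"
    using kq[OF a] by (simp add: k_def)
  ultimately show ?thesis
    by (simp add: norm_mult mult_left_mono)
qed

definition holo2_at :: "(complex \<times> complex \<Rightarrow> complex) \<Rightarrow> complex \<times> complex \<Rightarrow> bool" where
  "holo2_at F x \<longleftrightarrow> (\<exists>a b. (F has_derivative (\<lambda>(u, v). a * u + b * v)) (at x))"

lemma holo2_iff_holo2_at: "holo2 F S \<longleftrightarrow> (\<forall>x\<in>S. holo2_at F x)"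
  by (simp add: holo2_def holo2_at_def)

lemma holo2_at_const: "holo2_at (\<lambda>_. c) x"
  unfolding holo2_at_def
  by (rule exI[of _ 0], rule exI[of _ 0], rule has_derivative_eq_rhs[OF has_derivative_const]) auto

lemma holo2_at_fst: "holo2_at fst x"
  unfolding holo2_at_def
  by (rule exI[of _ 1], rule exI[of _ 0], rule has_derivative_eq_rhs[OF has_derivative_fst[OF has_derivative_ident]]) auto

lemma holo2_at_snd: "holo2_at snd x"
  unfolding holo2_at_def
  by (rule exI[of _ 0], rule exI[of _ 1], rule has_derivative_eq_rhs[OF has_derivative_snd[OF has_derivative_ident]]) auto

lemma holo2_at_add:
  assumes "holo2_at f x" "holo2_at g x"
  shows "holo2_at (\<lambda>y. f y + g y) x"
proof -
  obtain a1 b1 a2 b2 where f: "(f has_derivative (\<lambda>(u, v). a1 * u + b1 * v)) (at x)"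
    and g: "(g has_derivative (\<lambda>(u, v). a2 * u + b2 * v)) (at x)"
    using assms by (auto simp: holo2_at_def)
  have "((\<lambda>y. f y + g y) has_derivative (\<lambda>(u, v). (a1 + a2) * u + (b1 + b2) * v)) (at x)"
    by (rule has_derivative_eq_rhs[OF has_derivative_add[OF f g]]) (auto simp: algebra_simps)
  then show ?thesis
    unfolding holo2_at_def by blast
qed

lemma holo2_at_mult:
  assumes "holo2_at f x" "holo2_at g x"
  shows "holo2_at (\<lambda>y. f y * g y) x"
proof -
  obtain a1 b1 a2 b2 where f: "(f has_derivative (\<lambda>(u, v). a1 * u + b1 * v)) (at x)"
    and g: "(g has_derivative (\<lambda>(u, v). a2 * u + b2 * v)) (at x)"
    using assms by (auto simp: holo2_at_def)
  have "((\<lambda>y. f y * g y) has_derivative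
      (\<lambda>(u, v). (f x * a2 + a1 * g x) * u + (f x * b2 + b1 * g x) * v)) (at x)"
    by (rule has_derivative_eq_rhs[OF has_derivative_mult[OF f g]]) (auto simp: algebra_simps)
  then show ?thesis
    unfolding holo2_at_def by blast
qed

lemma holo2_at_divide:
  assumes "holo2_at f x" "holo2_at g x" "g x \<noteq> 0"
  shows "holo2_at (\<lambda>y. f y / g y) x"
proof -
  obtain a1 b1 a2 b2 where f: "(f has_derivative (\<lambda>(u, v). a1 * u + b1 * v)) (at x)"
    and g: "(g has_derivative (\<lambda>(u, v). a2 * u + b2 * v)) (at x)"
    using assms by (auto simp: holo2_at_def)
  have "((\<lambda>y. f y / g y) has_derivative (\<lambda>(u, v).
      ((a1 * g x - f x * a2) / (g x * g x)) * u + ((b1 * g x - f x * b2) / (g x * g x)) * v)) (at x)"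
    by (rule has_derivative_eq_rhs[OF has_derivative_divide'[OF f g \<open>g x \<noteq> 0\<close>]])
       (use \<open>g x \<noteq> 0\<close> in \<open>auto simp: fun_eq_iff field_simps\<close>)
  then show ?thesis
    unfolding holo2_at_def by blast
qed

lemma holo2_at_compose:
  assumes "holo2_at f x" and "g field_differentiable at (f x)"
  shows "holo2_at (\<lambda>y. g (f y)) x"
proof -
  obtain a b where f: "(f has_derivative (\<lambda>(u, v). a * u + b * v)) (at x)"
    using assms by (auto simp: holo2_at_def)
  obtain d where "(g has_field_derivative d) (at (f x))"
    using assms(2) by (auto simp: field_differentiable_def)
  then have g: "(g has_derivative (\<lambda>h. d * h)) (at (f x))"
    by (simp add: has_field_derivative_def mult_commute_abs)
  have "((\<lambda>y. g (f y)) has_derivative (\<lambda>(u, v). (d * a) * u + (d * b) * v)) (at x)"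
    by (rule has_derivative_eq_rhs[OF has_derivative_compose[OF f g]]) (auto simp: algebra_simps)
  then show ?thesis
    unfolding holo2_at_def by blast
qed

lemma holomorphic_on_holo2_compose:
  assumes F: "holo2 F D" and \<psi>: "holo_disc_map \<psi> D"
  shows "(\<lambda>z. F (\<psi> z)) holomorphic_on ball 0 1"
  unfolding holomorphic_on_def
proof
  fix z :: complex
  assume z: "z \<in> ball 0 1"
  obtain d1 where d1: "((\<lambda>z. fst (\<psi> z)) has_derivative (\<lambda>h. d1 * h)) (at z)"
    using \<psi> z holomorphic_on_imp_differentiable_at[of _ "ball 0 1"]
    by (fastforce simp: holo_disc_map_def unit_disc_def field_differentiable_def
        has_field_derivative_def mult_commute_abs)
  obtain d2 where d2: "((\<lambda>z. snd (\<psi> z)) has_derivative (\<lambda>h. d2 * h)) (at z)"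
    using \<psi> z holomorphic_on_imp_differentiable_at[of _ "ball 0 1"]
    by (fastforce simp: holo_disc_map_def unit_disc_def field_differentiable_def
        has_field_derivative_def mult_commute_abs)
  have "\<psi> z \<in> D"
    using \<psi> z by (auto simp: holo_disc_map_def unit_disc_def)
  then obtain a b where Fd: "(F has_derivative (\<lambda>(u, v). a * u + b * v)) (at (\<psi> z))"
    using F by (auto simp: holo2_def)
  have "((\<lambda>z. F (\<psi> z)) has_derivative (\<lambda>h. (a * d1 + b * d2) * h)) (at z)"
    using has_derivative_compose[OF has_derivative_Pair[OF d1 d2, unfolded prod.collapse] Fd]
    by (rule has_derivative_eq_rhs) (auto simp: algebra_simps)
  then show "(\<lambda>z. F (\<psi> z)) field_differentiable at z within ball 0 1"
    by (auto simp: field_differentiable_def has_field_derivative_def mult_commute_abs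
        intro: has_derivative_at_withinI)
qed

lemma elog_mono: "0 \<le> x \<Longrightarrow> x \<le> y \<Longrightarrow> elog x \<le> elog y"
  by (auto simp: elog_def)

lemma elog_mult: "0 \<le> x \<Longrightarrow> 0 \<le> y \<Longrightarrow> elog (x * y) = elog x + elog y"
  by (auto simp: elog_def ln_mult)

lemma green_c_le_lempert:
  assumes "p \<noteq> q"
  shows "green_c D z [p, q] \<le> lempert D z [p, q]"
  unfolding green_c_def lempert_def
proof (rule Sup_least, rule Inf_greatest, elim CollectE exE conjE)
  fix x y F \<psi> ls
  assume x: "x = elog (norm (F z))" and F: "holo2 F D" and F_disc: "F ` D \<subseteq> unit_disc"
    and F_zeros: "\<forall>j<length [p, q]. F ([p, q] ! j) = 0"
    and y: "y = (\<Sum>j<length [p, q]. elog (norm (ls ! j)))" and \<psi>: "holo_disc_map \<psi> D"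
    and "\<psi> 0 = z" and "length ls = length [p, q]"
    and ls: "\<forall>j<length [p, q]. ls ! j \<in> unit_disc \<and> \<psi> (ls ! j) = [p, q] ! j"
  obtain a b where ab: "ls = [a, b]"
    using \<open>length ls = length [p, q]\<close>
    by (metis (no_types) length_0_conv length_Suc_conv numeral_2_eq_2 Suc_1)
  have a: "norm a < 1" "\<psi> a = p" and b: "norm b < 1" "\<psi> b = q"
    using ls[rule_format, of 0] ls[rule_format, of 1] by (auto simp: ab unit_disc_def)
  have "norm (F (\<psi> 0)) \<le> norm a * norm b"
  proof (rule schwarz_pick_two_zeros[OF holomorphic_on_holo2_compose[OF F \<psi>] _ a(1) b(1)])
    show "norm (F (\<psi> w)) < 1" if "norm w < 1" for w
    proof -
      have "\<psi> w \<in> D"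
        using \<psi> that by (auto simp: holo_disc_map_def unit_disc_def)
      then show ?thesis
        using F_disc by (auto simp: unit_disc_def)
    qed
    show "a \<noteq> b" "F (\<psi> a) = 0" "F (\<psi> b) = 0"
      using a b F_zeros \<open>p \<noteq> q\<close> by (auto simp: less_Suc_eq)
  qed
  then have "x \<le> elog (norm a * norm b)"
    using x \<open>\<psi> 0 = z\<close> by (simp add: elog_mono)
  then show "x \<le> y"
    using y ab by (simp add: elog_mult add.commute)
qed

lemma lempert_le_elog:
  assumes "holo_disc_map \<psi> D" "\<psi> 0 = z" "a \<in> unit_disc" "b \<in> unit_disc" "\<psi> a = p" "\<psi> b = q"
  shows "lempert D z [p, q] \<le> elog (norm a) + elog (norm b)"
  unfolding lempert_def
  by (rule Inf_lower, rule CollectI, rule exI[of _ \<psi>], rule exI[of _ "[a, b]"])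
     (use assms in \<open>auto simp: less_Suc_eq add.commute\<close>)

lemma elog_le_green_c:
  assumes "holo2 F D" "F ` D \<subseteq> unit_disc" "F p = 0" "F q = 0"
  shows "elog (norm (F z)) \<le> green_c D z [p, q]"
  unfolding green_c_def
  by (rule Sup_upper, rule CollectI, rule exI[of _ F]) (use assms in \<open>auto simp: less_Suc_eq\<close>)

definition inner_num :: "complex \<Rightarrow> real \<Rightarrow> complex \<Rightarrow> complex \<Rightarrow> complex" where
  "inner_num \<eta> t z w = of_real t * z + of_real (1 - t) * w + \<eta> * z * w"

definition inner_den :: "complex \<Rightarrow> real \<Rightarrow> complex \<Rightarrow> complex \<Rightarrow> complex" where
  "inner_den \<eta> t z w = 1 + \<eta> * (of_real (1 - t) * z + of_real t * w)"

lemma norm_inner_den_sq_minus_norm_inner_num_sq: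
  fixes \<eta> z w :: complex and t :: real
  assumes "norm \<eta> = 1"
  shows "norm (inner_den \<eta> t z w)^2 - norm (inner_num \<eta> t z w)^2
     = (1 - t) * (1 - norm w^2) * norm (1 + \<eta> * z)^2 + t * (1 - norm z^2) * norm (1 + \<eta> * w)^2"
proof -
  have polynomial_identity: "e * ce = 1 \<Longrightarrow>
      (1 + e * ((1 - s) * z + s * w)) * (1 + ce * ((1 - s) * cz + s * cw))
      - (s * z + (1 - s) * w + e * z * w) * (s * cz + (1 - s) * cw + ce * cz * cw)
    = (1 - s) * (1 - w * cw) * ((1 + e * z) * (1 + ce * cz))
      + s * (1 - z * cz) * ((1 + e * w) * (1 + ce * cw))"
    for e ce s z w cz cw :: complex
    by algebra
  have "\<eta> * cnj \<eta> = 1"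
    using assms by (simp add: complex_norm_square[symmetric])
  then have "complex_of_real (norm (inner_den \<eta> t z w)^2 - norm (inner_num \<eta> t z w)^2)
     = of_real ((1 - t) * (1 - norm w^2) * norm (1 + \<eta> * z)^2 + t * (1 - norm z^2) * norm (1 + \<eta> * w)^2)"
    unfolding inner_num_def inner_den_def of_real_diff of_real_add of_real_mult complex_norm_square
      of_real_1 complex_cnj_add complex_cnj_mult complex_cnj_diff complex_cnj_complex_of_real complex_cnj_one
    by (rule polynomial_identity)
  then show ?thesis
    by (simp only: of_real_eq_iff)
qed

lemma norm_inner_num_less_norm_inner_den:
  fixes \<eta> z w :: complex and t :: real
  assumes "norm \<eta> = 1" "0 \<le> t" "t \<le> 1" "norm z < 1" "norm w < 1"
  shows "norm (inner_num \<eta> t z w) < norm (inner_den \<eta> t z w)"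
proof -
  have "1 + \<eta> * v \<noteq> 0" if "norm v < 1" for v
  proof
    assume "1 + \<eta> * v = 0"
    then have "norm (\<eta> * v) = 1"
      by (metis add_eq_0_iff norm_minus_cancel norm_one)
    with that \<open>norm \<eta> = 1\<close> show False
      by (simp add: norm_mult)
  qed
  then have "0 < (1 - norm w^2) * norm (1 + \<eta> * z)^2" "0 < (1 - norm z^2) * norm (1 + \<eta> * w)^2"
    using assms by (simp_all add: abs_square_less_1)
  then have "0 < (1 - t) * ((1 - norm w^2) * norm (1 + \<eta> * z)^2) + t * ((1 - norm z^2) * norm (1 + \<eta> * w)^2)"
    using assms(2,3) by (cases "t = 0") (auto intro: add_nonneg_pos add_pos_nonneg)
  then have "norm (inner_num \<eta> t z w)^2 < norm (inner_den \<eta> t z w)^2"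
    using norm_inner_den_sq_minus_norm_inner_num_sq[OF assms(1), of t z w] by (simp add: mult.assoc)
  then show ?thesis
    by (rule power_less_imp_less_base[OF _ norm_ge_zero])
qed

lemma inner_num_inner_den_mobius:
  fixes \<alpha> \<beta> l :: complex and t :: real
  defines "\<eta> \<equiv> cnj (\<alpha> - \<beta>) / (\<alpha> - \<beta>)" and "\<gamma> \<equiv> of_real t * \<alpha> + of_real (1 - t) * \<beta>"
  defines "z \<equiv> l * mobius \<alpha> l" and "w \<equiv> l * mobius \<beta> l"
  assumes "1 - cnj \<alpha> * l \<noteq> 0" "1 - cnj \<beta> * l \<noteq> 0" "\<alpha> \<noteq> \<beta>"
  shows "inner_num \<eta> t z w * (1 - cnj \<gamma> * l) = l * (\<gamma> - l) * inner_den \<eta> t z w"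
proof -
  have "(1 - cnj \<alpha> * l) * inverse (1 - cnj \<alpha> * l) = 1" "(1 - cnj \<beta> * l) * inverse (1 - cnj \<beta> * l) = 1"
    "(\<alpha> - \<beta>) * inverse (\<alpha> - \<beta>) = 1"
    using assms by simp_all
  then show ?thesis
    unfolding inner_num_def inner_den_def \<eta>_def \<gamma>_def z_def w_def mobius_def
    by (simp only: divide_inverse complex_cnj_add complex_cnj_mult complex_cnj_complex_of_real
        complex_cnj_diff complex_cnj_one of_real_diff of_real_1) algebra
qed

lemma inner_den_nonzero_and_norm_quotient_less_1:
  assumes "norm \<eta> = 1" "0 \<le> t" "t \<le> 1" "norm z < 1" "norm w < 1"
  shows "inner_den \<eta> t z w \<noteq> 0" and "norm (inner_num \<eta> t z w / inner_den \<eta> t z w) < 1"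
  using norm_inner_num_less_norm_inner_den[OF assms] by (auto simp: norm_divide divide_less_eq_1)

lemma inner_quotient_mobius:
  fixes \<alpha> \<beta> z :: complex and t :: real
  defines "\<eta> \<equiv> cnj (\<alpha> - \<beta>) / (\<alpha> - \<beta>)" and "\<gamma> \<equiv> of_real t * \<alpha> + of_real (1 - t) * \<beta>"
  assumes a: "norm \<alpha> < 1" and b: "norm \<beta> < 1" and "\<alpha> \<noteq> \<beta>" "0 \<le> t" "t \<le> 1" and z: "norm z < 1"
  shows "inner_num \<eta> t (z * mobius \<alpha> z) (z * mobius \<beta> z) / inner_den \<eta> t (z * mobius \<alpha> z) (z * mobius \<beta> z)
    = z * mobius \<gamma> z"
proof -
  have "norm \<eta> = 1"
    using \<open>\<alpha> \<noteq> \<beta>\<close> by (simp add: \<eta>_def norm_divide del: complex_cnj_diff)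
  then have "inner_den \<eta> t (z * mobius \<alpha> z) (z * mobius \<beta> z) \<noteq> 0"
    using inner_den_nonzero_and_norm_quotient_less_1 assms norm_mult_less norm_mobius_less_1
    by (metis mult_1)
  moreover have "1 - cnj \<gamma> * z \<noteq> 0"
    using mobius_denominator_nonzero norm_convex_combination_less_1 assms by metis
  ultimately show ?thesis
    using inner_num_inner_den_mobius[of \<alpha> z \<beta> t] mobius_denominator_nonzero assms
    by (simp add: \<eta>_def \<gamma>_def mobius_def field_simps)
qed

lemma holo_disc_map_mobius_pair:
  assumes a: "norm \<alpha> < 1" and b: "norm \<beta> < 1" and "norm \<omega> = 1"
  shows "holo_disc_map (\<lambda>z. (z * (\<omega> * mobius \<alpha> z), z * mobius \<beta> z)) bidisc"
  unfolding holo_disc_map_def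
proof (intro conjI)
  show "(\<lambda>z. fst (z * (\<omega> * mobius \<alpha> z), z * mobius \<beta> z)) holomorphic_on unit_disc"
    "(\<lambda>z. snd (z * (\<omega> * mobius \<alpha> z), z * mobius \<beta> z)) holomorphic_on unit_disc"
    using mobius_holomorphic[OF a] mobius_holomorphic[OF b]
    by (auto simp: unit_disc_def intro!: holomorphic_intros)
  have "norm z * norm (mobius a' z) < 1" if "norm a' < 1" "norm z < 1" for a' z
    using norm_mult_less[OF that(2) norm_mobius_less_1[OF that]] by (simp add: norm_mult)
  then show "(\<lambda>z. (z * (\<omega> * mobius \<alpha> z), z * mobius \<beta> z)) ` unit_disc \<subseteq> bidisc"
    using a b \<open>norm \<omega> = 1\<close> by (auto simp: bidisc_def unit_disc_def norm_mult)
qed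

lemma holo2_mobius_inner_quotient:
  assumes c: "norm c < 1" and "norm \<eta> = 1" "0 \<le> t" "t \<le> 1" "norm \<omega> = 1"
  defines "F \<equiv> \<lambda>y. mobius c (inner_num \<eta> t (cnj \<omega> * fst y) (snd y) / inner_den \<eta> t (cnj \<omega> * fst y) (snd y))"
  shows "holo2 F bidisc" and "F ` bidisc \<subseteq> unit_disc"
proof -
  have quotient: "inner_den \<eta> t (cnj \<omega> * fst y) (snd y) \<noteq> 0"
    "norm (inner_num \<eta> t (cnj \<omega> * fst y) (snd y) / inner_den \<eta> t (cnj \<omega> * fst y) (snd y)) < 1"
    if "y \<in> bidisc" for y
    using inner_den_nonzero_and_norm_quotient_less_1[OF assms(2-4), of "cnj \<omega> * fst y" "snd y"]
      that \<open>norm \<omega> = 1\<close> by (auto simp: bidisc_def unit_disc_def norm_mult)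
  show "F ` bidisc \<subseteq> unit_disc"
    using quotient(2) norm_mobius_less_1[OF c] by (auto simp: F_def unit_disc_def)
  show "holo2 F bidisc"
    unfolding holo2_iff_holo2_at
  proof
    fix y
    assume y: "y \<in> bidisc"
    show "holo2_at F y"
      unfolding F_def
    proof (rule holo2_at_compose[where g = "mobius c"])
      show "holo2_at (\<lambda>y. inner_num \<eta> t (cnj \<omega> * fst y) (snd y) / inner_den \<eta> t (cnj \<omega> * fst y) (snd y)) y"
        unfolding inner_num_def inner_den_def
        by (intro holo2_at_divide holo2_at_add holo2_at_mult holo2_at_const holo2_at_fst holo2_at_snd)
           (use quotient(1)[OF y] in \<open>simp add: inner_den_def\<close>)
      show "mobius c field_differentiable at (inner_num \<eta> t (cnj \<omega> * fst y) (snd y) / inner_den \<eta> t (cnj \<omega> * fst y) (snd y))"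
        using holomorphic_on_imp_differentiable_at[OF mobius_holomorphic[OF c]] quotient(2)[OF y] by simp
    qed
  qed
qed

lemma bidisc_function_pullback_exists:
  fixes \<alpha> \<beta> \<omega> c :: complex and t :: real
  defines "\<gamma> \<equiv> of_real t * \<alpha> + of_real (1 - t) * \<beta>"
  assumes a: "norm \<alpha> < 1" and b: "norm \<beta> < 1" and "\<alpha> \<noteq> \<beta>" "0 \<le> t" "t \<le> 1"
    and "norm \<omega> = 1" "norm c < 1"
  obtains F where "holo2 F bidisc" "F ` bidisc \<subseteq> unit_disc" "F (0, 0) = c"
    "\<And>z. norm z < 1 \<Longrightarrow> F (z * (\<omega> * mobius \<alpha> z), z * mobius \<beta> z) = mobius c (z * mobius \<gamma> z)"
proof
  define \<eta> where "\<eta> = cnj (\<alpha> - \<beta>) / (\<alpha> - \<beta>)"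
  define F where "F y = mobius c (inner_num \<eta> t (cnj \<omega> * fst y) (snd y) / inner_den \<eta> t (cnj \<omega> * fst y) (snd y))"
    for y
  have "norm \<eta> = 1"
    using \<open>\<alpha> \<noteq> \<beta>\<close> by (simp add: \<eta>_def norm_divide del: complex_cnj_diff)
  then show "holo2 F bidisc" "F ` bidisc \<subseteq> unit_disc"
    using holo2_mobius_inner_quotient[of c \<eta> t \<omega>] assms by (simp_all add: F_def[abs_def])
  show "F (0, 0) = c"
    by (simp add: F_def inner_num_def inner_den_def)
  have "cnj \<omega> * \<omega> = 1"
    using \<open>norm \<omega> = 1\<close> by (simp add: complex_norm_square[symmetric] mult.commute)
  then have \<omega>_cancel: "cnj \<omega> * (z * (\<omega> * m)) = z * m" for z m
    by (metis mult.assoc mult.left_commute mult_1)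
  show "F (z * (\<omega> * mobius \<alpha> z), z * mobius \<beta> z) = mobius c (z * mobius \<gamma> z)" if "norm z < 1" for z
    unfolding F_def fst_conv snd_conv \<omega>_cancel
    using inner_quotient_mobius[OF a b assms(4-6) that] by (simp add: \<eta>_def \<gamma>_def)
qed

theorem corollary4:
  fixes \<alpha> \<beta> \<omega> lam :: complex and t :: real
  assumes "\<alpha> \<in> unit_disc" and "\<beta> \<in> unit_disc" and "\<alpha> \<noteq> \<beta>"
    and "0 \<le> t" and "t \<le> 1" and "norm \<omega> = 1"
    and "lam \<in> unit_disc"
  defines "\<gamma> \<equiv> of_real t * \<alpha> + of_real (1 - t) * \<beta>"
  defines "\<phi> \<equiv> (\<lambda>z. (z * (\<omega> * mobius \<alpha> z), z * mobius \<beta> z))"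
  assumes "mobius \<gamma> lam \<noteq> lam" and "\<phi> lam \<noteq> \<phi> (mobius \<gamma> lam)"
  shows "c2 (\<phi> lam) (\<phi> (mobius \<gamma> lam)) = l2 (\<phi> lam) (\<phi> (mobius \<gamma> lam))"
proof -
  have a: "norm \<alpha> < 1" and b: "norm \<beta> < 1" and l: "norm lam < 1"
    using assms(1,2,7) by (auto simp: unit_disc_def)
  define \<mu> where "\<mu> = mobius \<gamma> lam"
  have "norm \<gamma> < 1"
    unfolding \<gamma>_def by (rule norm_convex_combination_less_1[OF a b assms(4,5)])
  then have \<mu>: "norm \<mu> < 1" "mobius \<gamma> \<mu> = lam"
    using norm_mobius_less_1 mobius_mobius l by (auto simp: \<mu>_def)
  obtain F where F: "holo2 F bidisc" "F ` bidisc \<subseteq> unit_disc" "F (0, 0) = lam * \<mu>"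
    and F_\<phi>: "\<And>z. norm z < 1 \<Longrightarrow> F (\<phi> z) = mobius (lam * \<mu>) (z * mobius \<gamma> z)"
    using bidisc_function_pullback_exists[OF a b assms(3-6), of "lam * \<mu>"] norm_mult_less[OF l \<mu>(1)]
    unfolding \<phi>_def \<gamma>_def by auto
  have F_zeros: "F (\<phi> lam) = 0" "F (\<phi> \<mu>) = 0"
    using F_\<phi>[OF l] F_\<phi>[OF \<mu>(1)] \<mu>(2) by (simp_all add: \<mu>_def[symmetric] mult.commute)
  have "l2 (\<phi> lam) (\<phi> \<mu>) \<le> elog (norm lam) + elog (norm \<mu>)"
    unfolding l2_def using lempert_le_elog holo_disc_map_mobius_pair[OF a b assms(6)] l \<mu>(1)
    by (auto simp: \<phi>_def unit_disc_def)
  also have "\<dots> = elog (norm (F (0, 0)))"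
    by (simp add: F(3) norm_mult elog_mult)
  also have "\<dots> \<le> c2 (\<phi> lam) (\<phi> \<mu>)"
    unfolding c2_def using F(1,2) F_zeros by (rule elog_le_green_c)
  finally have "l2 (\<phi> lam) (\<phi> \<mu>) \<le> c2 (\<phi> lam) (\<phi> \<mu>)" .
  moreover have "c2 (\<phi> lam) (\<phi> \<mu>) \<le> l2 (\<phi> lam) (\<phi> \<mu>)"
    unfolding c2_def l2_def by (rule green_c_le_lempert) (use assms(11) in \<open>simp add: \<mu>_def\<close>)
  ultimately show ?thesis
    unfolding \<mu>_def by (rule antisym[rotated])
qed

end
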